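(* Let $r\in\mathbb{Z}_{\ge0}$ and let $\chi$ be a character of $T$ of depth $r$. Then for every integer $n\ge r+1$, every irreducible $\mathcal{K}$-subrepresentation of $V_\chi^{\mathcal{K}_n}$ has depth less than $n$, and $\dim_{\mathbb{C}}V_\chi^{\mathcal{K}_n}=q^{n-1}(q+1)$.
   Context: Let $F$ be a non-archimedean local field with odd residual characteristic, ring of integers $\mathcal{O}_F$, residue field of cardinality $q$. Fix a non-square $\epsilon\in\mathcal{O}_F^\times$, $E=F[\sqrt\epsilon]$ with ring of integers $\mathcal{O}_E$, maximal ideal $\mathfrak{p}_E$; $\overline{x}$ is Galois conjugation. $G=\{g\in\mathrm{GL}_2(E):\overline{g}^{\top}\mathrm{w}g=\mathrm{w}\}$, $\mathrm{w}=\begin{pmatrix}0&1\\1&0\end{pmatrix}$; $\mathcal{K}=G\cap M_2(\mathcal{O}_E)$, $\mathcal{K}_n=\{g\in\mathcal{K}:g\equiv I\bmod\mathfrak{p}_E^n\}$. $B$ upper triangular matrices in $G$, $T=\{t(a)=\mathrm{diag}(a,\overline a^{-1}):a\in E^\times\}$, $U=\{\begin{pmatrix}1&\sqrt\epsilon b\\0&1\end{pmatrix}:b\in F\}$. $T_0=\{t(a):a\in\mathcal{O}_E^\times\}$, $T_n=\{t(a):a\in1+\mathfrak{p}_E^n\}$. A character $\chi$ of $T$ has depth $r$ if $\chi|_{T_r}\ne\mathbbm{1}$, $\chi|_{T_{r+1}}=\mathbbm{1}$; a character trivial on $T_0$ also has depth $0$. $V_\chi$ is the space of locally constant $f:G\to\mathbb{C}$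 with $f(bg)=\chi(b)f(g)$ ($b\in B$; $\chi$ trivial on $U$), $G$ acting by right translation; $V_\chi^{\mathcal{K}_n}$ is its $\mathcal{K}$-stable subspace of $\mathcal{K}_n$-fixed vectors. The depth of an irreducible smooth representation of $\mathcal{K}$ is the least integer $d\ge0$ such that $\mathcal{K}_{d+1}$ acts trivially. *)

theory Defs
  imports Complex_Main "HOL-Library.Function_Algebras"
begin

text \<open>F is a field type 'f with a normalized discrete valuation v (only meaningful
  on nonzero elements).  x is in p_F^m iff x = 0 or v x >= m; O_F = p_F^0.\<close>

definition inP :: "('f::field \<Rightarrow> int) \<Rightarrow> int \<Rightarrow> 'f \<Rightarrow> bool" where
  "inP v m x \<longleftrightarrow> x = 0 \<or> m \<le> v x"

definition OF :: "('f::field \<Rightarrow> int) \<Rightarrow> 'f set" where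
  "OF v = {x. inP v 0 x}"

definition resrel :: "('f::field \<Rightarrow> int) \<Rightarrow> ('f \<times> 'f) set" where
  "resrel v = {(x, y). x \<in> OF v \<and> y \<in> OF v \<and> inP v 1 (x - y)}"

definition residue_field :: "('f::field \<Rightarrow> int) \<Rightarrow> 'f set set" where
  "residue_field v = OF v // resrel v"

definition resq :: "('f::field \<Rightarrow> int) \<Rightarrow> nat" where
  "resq v = card (residue_field v)"

definition discrete_valuation :: "('f::field \<Rightarrow> int) \<Rightarrow> bool" where
  "discrete_valuation v \<longleftrightarrow>
     (\<forall>x y. x \<noteq> 0 \<longrightarrow> y \<noteq> 0 \<longrightarrow> v (x * y) = v x + v y) \<and>
     (\<forall>x y. x \<noteq> 0 \<longrightarrow> y \<noteq> 0 \<longrightarrow> x + y \<noteq> 0 \<longrightarrow> min (v x) (v y) \<le> v (x + y)) \<and>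
     (\<exists>\<pi>. \<pi> \<noteq> 0 \<and> v \<pi> = 1)"

definition valuation_complete :: "('f::field \<Rightarrow> int) \<Rightarrow> bool" where
  "valuation_complete v \<longleftrightarrow>
     (\<forall>s :: nat \<Rightarrow> 'f.
        (\<forall>m. \<exists>N. \<forall>i\<ge>N. \<forall>j\<ge>N. inP v m (s i - s j)) \<longrightarrow>
        (\<exists>L. \<forall>m. \<exists>N. \<forall>i\<ge>N. inP v m (s i - L)))"

definition nonarch_local_field :: "('f::field \<Rightarrow> int) \<Rightarrow> bool" where
  "nonarch_local_field v \<longleftrightarrow> discrete_valuation v \<and> valuation_complete v \<and>
     finite (residue_field v)"

text \<open>An element (a, b) :: 'f \<times> 'f stands for a + b sqrt eps.\<close>
type_synonym 'f qe = "'f \<times> 'f"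

definition eadd :: "'f::field qe \<Rightarrow> 'f qe \<Rightarrow> 'f qe" where
  "eadd z w = (fst z + fst w, snd z + snd w)"

definition esub :: "'f::field qe \<Rightarrow> 'f qe \<Rightarrow> 'f qe" where
  "esub z w = (fst z - fst w, snd z - snd w)"

definition emul :: "'f::field \<Rightarrow> 'f qe \<Rightarrow> 'f qe \<Rightarrow> 'f qe" where
  "emul eps z w = (fst z * fst w + eps * snd z * snd w, fst z * snd w + snd z * fst w)"

definition econj :: "'f::field qe \<Rightarrow> 'f qe" where
  "econj z = (fst z, - snd z)"

definition enorm :: "'f::field \<Rightarrow> 'f qe \<Rightarrow> 'f" where
  "enorm eps z = fst z * fst z - eps * snd z * snd z"

definition einv :: "'f::field \<Rightarrow> 'f qe \<Rightarrow> 'f qe" where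
  "einv eps z = (fst z / enorm eps z, - snd z / enorm eps z)"

definition ezero :: "'f::field qe" where "ezero = (0, 0)"
definition eone :: "'f::field qe" where "eone = (1, 0)"

text \<open>p_E^n = {(a,b). a, b \<in> p_F^n} (E/F unramified since eps is a non-square unit
  and the residue characteristic is odd); O_E = p_E^0.\<close>
definition inPE :: "('f::field \<Rightarrow> int) \<Rightarrow> nat \<Rightarrow> 'f qe \<Rightarrow> bool" where
  "inPE v n z \<longleftrightarrow> inP v (int n) (fst z) \<and> inP v (int n) (snd z)"

definition inOE :: "('f::field \<Rightarrow> int) \<Rightarrow> 'f qe \<Rightarrow> bool" where
  "inOE v z \<longleftrightarrow> inPE v 0 z"

definition unitOE :: "('f::field \<Rightarrow> int) \<Rightarrow> 'f qe \<Rightarrow> bool" where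
  "unitOE v z \<longleftrightarrow> inOE v z \<and> \<not> inPE v 1 z"

datatype 'a m2 = M2 'a 'a 'a 'a

fun m11 :: "'a m2 \<Rightarrow> 'a" where "m11 (M2 a b c d) = a"
fun m12 :: "'a m2 \<Rightarrow> 'a" where "m12 (M2 a b c d) = b"
fun m21 :: "'a m2 \<Rightarrow> 'a" where "m21 (M2 a b c d) = c"
fun m22 :: "'a m2 \<Rightarrow> 'a" where "m22 (M2 a b c d) = d"

definition mmul :: "'f::field \<Rightarrow> 'f qe m2 \<Rightarrow> 'f qe m2 \<Rightarrow> 'f qe m2" where
  "mmul eps g h =
     M2 (eadd (emul eps (m11 g) (m11 h)) (emul eps (m12 g) (m21 h)))
        (eadd (emul eps (m11 g) (m12 h)) (emul eps (m12 g) (m22 h)))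
        (eadd (emul eps (m21 g) (m11 h)) (emul eps (m22 g) (m21 h)))
        (eadd (emul eps (m21 g) (m12 h)) (emul eps (m22 g) (m22 h)))"

definition mdet :: "'f::field \<Rightarrow> 'f qe m2 \<Rightarrow> 'f qe" where
  "mdet eps g = esub (emul eps (m11 g) (m22 g)) (emul eps (m12 g) (m21 g))"

definition mconjT :: "'f::field qe m2 \<Rightarrow> 'f qe m2" where
  "mconjT g = M2 (econj (m11 g)) (econj (m21 g)) (econj (m12 g)) (econj (m22 g))"

definition mid :: "'f::field qe m2" where "mid = M2 eone ezero ezero eone"
definition wmat :: "'f::field qe m2" where "wmat = M2 ezero eone eone ezero"

definition inG :: "'f::field \<Rightarrow> 'f qe m2 \<Rightarrow> bool" where
  "inG eps g \<longleftrightarrow> mdet eps g \<noteq> ezero \<and> mmul eps (mmul eps (mconjT g) wmat) g = wmat"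

definition inB :: "'f::field \<Rightarrow> 'f qe m2 \<Rightarrow> bool" where
  "inB eps g \<longleftrightarrow> inG eps g \<and> m21 g = ezero"

definition inK :: "('f::field \<Rightarrow> int) \<Rightarrow> 'f \<Rightarrow> 'f qe m2 \<Rightarrow> bool" where
  "inK v eps g \<longleftrightarrow> inG eps g \<and> inOE v (m11 g) \<and> inOE v (m12 g) \<and> inOE v (m21 g) \<and> inOE v (m22 g)"

definition inKn :: "('f::field \<Rightarrow> int) \<Rightarrow> 'f \<Rightarrow> nat \<Rightarrow> 'f qe m2 \<Rightarrow> bool" where
  "inKn v eps n g \<longleftrightarrow> inK v eps g \<and>
     inPE v n (esub (m11 g) eone) \<and> inPE v n (m12 g) \<and> inPE v n (m21 g) \<and>
     inPE v n (esub (m22 g) eone)"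

definition tmat :: "'f::field \<Rightarrow> 'f qe \<Rightarrow> 'f qe m2" where
  "tmat eps a = M2 a ezero ezero (econj (einv eps a))"

text \<open>a \<in> E^x with t(a) \<in> T_n: T_0 = t(O_E^x), T_n = t(1 + p_E^n) for n \<ge> 1.\<close>
definition inTn :: "('f::field \<Rightarrow> int) \<Rightarrow> nat \<Rightarrow> 'f qe \<Rightarrow> bool" where
  "inTn v n a \<longleftrightarrow> (if n = 0 then unitOE v a else inPE v n (esub a eone))"

text \<open>A character of T is given by chi : E^x \<rightarrow> C^x, a \<mapsto> chi(t(a)) (t is an
  isomorphism E^x \<cong> T).\<close>
definition is_char_T :: "'f::field \<Rightarrow> ('f qe \<Rightarrow> complex) \<Rightarrow> bool" where
  "is_char_T eps chi \<longleftrightarrow>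
     (\<forall>a. a \<noteq> ezero \<longrightarrow> chi a \<noteq> 0) \<and>
     (\<forall>a b. a \<noteq> ezero \<longrightarrow> b \<noteq> ezero \<longrightarrow> chi (emul eps a b) = chi a * chi b)"

definition char_trivial_on :: "('f::field \<Rightarrow> int) \<Rightarrow> ('f qe \<Rightarrow> complex) \<Rightarrow> nat \<Rightarrow> bool" where
  "char_trivial_on v chi n \<longleftrightarrow> (\<forall>a. inTn v n a \<longrightarrow> chi a = 1)"

definition char_depth :: "('f::field \<Rightarrow> int) \<Rightarrow> ('f qe \<Rightarrow> complex) \<Rightarrow> nat \<Rightarrow> bool" where
  "char_depth v chi r \<longleftrightarrow>
     (\<not> char_trivial_on v chi r \<and> char_trivial_on v chi (r + 1)) \<or>
     (r = 0 \<and> char_trivial_on v chi 0)"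

text \<open>Extension of chi to B = T U, trivial on U: for b = t(a) u one has a = b_11.\<close>
definition chiB :: "('f::field qe \<Rightarrow> complex) \<Rightarrow> 'f qe m2 \<Rightarrow> complex" where
  "chiB chi b = chi (m11 b)"

definition cscale :: "complex \<Rightarrow> ('g \<Rightarrow> complex) \<Rightarrow> ('g \<Rightarrow> complex)" where
  "cscale c f = (\<lambda>x. c * f x)"

definition rtrans :: "'f::field \<Rightarrow> 'f qe m2 \<Rightarrow> ('f qe m2 \<Rightarrow> complex) \<Rightarrow> ('f qe m2 \<Rightarrow> complex)" where
  "rtrans eps k f = (\<lambda>g. f (mmul eps g k))"

text \<open>V_chi: locally constant functions on G (extended by 0 off G) with
  f(bg) = chi(b) f(g).  Local constancy: the K_m form a neighbourhood basis of 1.\<close>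
definition Vchi :: "('f::field \<Rightarrow> int) \<Rightarrow> 'f \<Rightarrow> ('f qe \<Rightarrow> complex) \<Rightarrow> ('f qe m2 \<Rightarrow> complex) set" where
  "Vchi v eps chi = {f.
     (\<forall>g. \<not> inG eps g \<longrightarrow> f g = 0) \<and>
     (\<forall>b g. inB eps b \<longrightarrow> inG eps g \<longrightarrow> f (mmul eps b g) = chiB chi b * f g) \<and>
     (\<forall>g. inG eps g \<longrightarrow> (\<exists>m. \<forall>k. inKn v eps m k \<longrightarrow> f (mmul eps g k) = f g))}"

definition VchiKn :: "('f::field \<Rightarrow> int) \<Rightarrow> 'f \<Rightarrow> ('f qe \<Rightarrow> complex) \<Rightarrow> nat \<Rightarrow> ('f qe m2 \<Rightarrow> complex) set" where
  "VchiKn v eps chi n = {f \<in> Vchi v eps chi. \<forall>k. inKn v eps n k \<longrightarrow> rtrans eps k f = f}"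

definition K_stable :: "('f::field \<Rightarrow> int) \<Rightarrow> 'f \<Rightarrow> ('f qe m2 \<Rightarrow> complex) set \<Rightarrow> bool" where
  "K_stable v eps W \<longleftrightarrow> (\<forall>k f. inK v eps k \<longrightarrow> f \<in> W \<longrightarrow> rtrans eps k f \<in> W)"

definition K_subrep :: "('f::field \<Rightarrow> int) \<Rightarrow> 'f \<Rightarrow> ('f qe m2 \<Rightarrow> complex) set \<Rightarrow> ('f qe m2 \<Rightarrow> complex) set \<Rightarrow> bool" where
  "K_subrep v eps V W \<longleftrightarrow> W \<subseteq> V \<and> module.subspace cscale W \<and> K_stable v eps W"

definition irreducible_K_subrep :: "('f::field \<Rightarrow> int) \<Rightarrow> 'f \<Rightarrow> ('f qe m2 \<Rightarrow> complex) set \<Rightarrow> ('f qe m2 \<Rightarrow> complex) set \<Rightarrow> bool" where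
  "irreducible_K_subrep v eps V W \<longleftrightarrow> K_subrep v eps V W \<and> W \<noteq> {0} \<and>
     (\<forall>W'. K_subrep v eps W W' \<longrightarrow> W' = {0} \<or> W' = W)"

definition rep_depth :: "('f::field \<Rightarrow> int) \<Rightarrow> 'f \<Rightarrow> ('f qe m2 \<Rightarrow> complex) set \<Rightarrow> nat" where
  "rep_depth v eps W = (LEAST d. \<forall>k f. inKn v eps (d + 1) k \<longrightarrow> f \<in> W \<longrightarrow> rtrans eps k f = f)"

end

theory Submission
  imports Defs
begin

(* The dimension is computed by counting the double cosets B \ G / K_n. For g in G,
   g^* w g = w forces the bottom row (c, d) of g to be isotropic, c conj(d) + d conj(c) = 0;
   as 2 ~= 0 (q is odd), up to a unit this row is (y sqrt eps, 1) with y in O_F or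
   (1, x sqrt eps) with x in p_F. Right multiplication by K_n only changes y resp. x modulo
   p_F^n, giving q^n + q^(n-1) representatives, and comparing entries shows that they lie in
   distinct double cosets. Moreover, if b k0 k1 = b' k0 k1' then the upper left entry of
   b'^(-1) b lies in 1 + p_E^n, where chi is trivial because its depth r is below n. Hence each
   double coset supports the function b k0 k1 |-> chi(b), and these functions form a basis of
   V_chi^K_n: evaluation at the representatives gives the coefficients. The depth bound is
   immediate, since K_n acts trivially on V_chi^K_n. *)

lemma even_card_fixpoint_free_involution:
  assumes "finite A" "\<And>x. x \<in> A \<Longrightarrow> f x \<in> A \<and> f (f x) = x \<and> f x \<noteq> x"
  shows "even (card A)"
  using assms
proof (induction A rule: finite_psubset_induct)
  case (psubset A)
  show ?case
  proof (cases "A = {}")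
    case False
    then obtain x where x: "x \<in> A" by blast
    let ?A' = "A - {x, f x}"
    have "?A' \<subset> A" using x by blast
    moreover have "f y \<in> ?A' \<and> f (f y) = y \<and> f y \<noteq> y" if "y \<in> ?A'" for y
    proof -
      have "f y \<noteq> x" "f y \<noteq> f x"
        using that psubset.prems[of y] psubset.prems[of x] x by (metis DiffE insertCI)+
      then show ?thesis using that psubset.prems[of y] by blast
    qed
    ultimately have "even (card ?A')" using psubset.IH by blast
    moreover have "card A = card ?A' + 2"
    proof -
      have pair: "{x, f x} \<subseteq> A" "card {x, f x} = 2" using x psubset.prems[of x] by auto
      then show ?thesis
        using card_Diff_subset[of "{x, f x}" A] card_mono[OF psubset.hyps pair(1)] by simp
    qed
    ultimately show ?thesis by simp
  qed simp
qed

locale discrete_valued_field =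
  fixes v :: "'f::field \<Rightarrow> int"
  assumes discrete_valuation: "discrete_valuation v"
begin

lemma val_mult: "x \<noteq> 0 \<Longrightarrow> y \<noteq> 0 \<Longrightarrow> v (x * y) = v x + v y"
  using discrete_valuation unfolding discrete_valuation_def by blast

lemma val_add: "x \<noteq> 0 \<Longrightarrow> y \<noteq> 0 \<Longrightarrow> x + y \<noteq> 0 \<Longrightarrow> min (v x) (v y) \<le> v (x + y)"
  using discrete_valuation unfolding discrete_valuation_def by blast

lemma val_one: "v 1 = 0"
  using val_mult[of 1 1] by simp

lemma val_uminus: "v (- x) = v x"
proof (cases "x = 0")
  case False
  have "v (-1) = 0" using val_mult[of "-1" "-1"] val_one by simp
  then show ?thesis using val_mult[of "-1" x] False by simp
qed simp

lemma val_inverse: "x \<noteq> 0 \<Longrightarrow> v (inverse x) = - v x"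
  using val_mult[of x "inverse x"] val_one by simp

lemma inP_0 [simp]: "inP v m 0"
  by (simp add: inP_def)

lemma inP_1_iff: "inP v m 1 \<longleftrightarrow> m \<le> 0"
  by (simp add: inP_def val_one)

lemma inP_mono: "k \<le> m \<Longrightarrow> inP v m x \<Longrightarrow> inP v k x"
  unfolding inP_def by auto

lemma inP_add: "inP v m x \<Longrightarrow> inP v m y \<Longrightarrow> inP v m (x + y)"
  unfolding inP_def using val_add[of x y] by (cases "x = 0"; cases "y = 0"; cases "x + y = 0") auto

lemma inP_uminus_iff [simp]: "inP v m (- x) \<longleftrightarrow> inP v m x"
  by (simp add: inP_def val_uminus)

lemma inP_diff: "inP v m x \<Longrightarrow> inP v m y \<Longrightarrow> inP v m (x - y)"
  using inP_add[of m x "- y"] by simp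

lemma inP_mult: "inP v m x \<Longrightarrow> inP v k y \<Longrightarrow> inP v (m + k) (x * y)"
  unfolding inP_def using val_mult[of x y] by (cases "x = 0"; cases "y = 0") auto

lemma inP_mult_integral: "inP v m x \<Longrightarrow> inP v 0 y \<Longrightarrow> inP v m (x * y)"
  using inP_mult[of m x 0 y] by simp

definition unif :: 'f where
  "unif = (SOME \<pi>. \<pi> \<noteq> 0 \<and> v \<pi> = 1)"

lemma unif_nonzero: "unif \<noteq> 0" and val_unif: "v unif = 1"
proof -
  have "\<exists>\<pi>. \<pi> \<noteq> 0 \<and> v \<pi> = 1"
    using discrete_valuation unfolding discrete_valuation_def by blast
  then have "unif \<noteq> 0 \<and> v unif = 1"
    unfolding unif_def by (rule someI_ex)
  then show "unif \<noteq> 0" "v unif = 1" by auto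
qed

lemma val_unif_power: "v (unif ^ k) = int k"
  by (induction k) (simp_all add: val_one val_mult unif_nonzero val_unif)

lemma inP_unif_power_mult_iff: "inP v m (unif ^ k * z) \<longleftrightarrow> inP v (m - int k) z"
proof (cases "z = 0")
  case False
  then have "v (unif ^ k * z) = int k + v z"
    using val_mult[of "unif ^ k" z] by (simp add: unif_nonzero val_unif_power)
  then show ?thesis using False unif_nonzero unfolding inP_def by auto
qed simp

lemma inPE_mono: "m \<le> n \<Longrightarrow> inPE v n a \<Longrightarrow> inPE v m a"
  unfolding inPE_def using inP_mono[of "int m" "int n"] by auto

lemma inPE_inOE: "inPE v n a \<Longrightarrow> inOE v a"
  unfolding inOE_def using inPE_mono[of 0 n a] by simp

lemma inPE_ezero [simp]: "inPE v n ezero"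
  by (simp add: inPE_def ezero_def)

lemma inPE_eone_iff: "inPE v n eone \<longleftrightarrow> n = 0"
  by (simp add: inPE_def eone_def inP_1_iff)

lemma inPE_eadd: "inPE v n a \<Longrightarrow> inPE v n b \<Longrightarrow> inPE v n (eadd a b)"
  by (simp add: inPE_def eadd_def inP_add)

lemma inPE_esub: "inPE v n a \<Longrightarrow> inPE v n b \<Longrightarrow> inPE v n (esub a b)"
  by (simp add: inPE_def esub_def inP_diff)

lemma inPE_econj_iff [simp]: "inPE v n (econj a) \<longleftrightarrow> inPE v n a"
  by (simp add: inPE_def econj_def)

lemma inPE_pure_iff [simp]: "inPE v n (0, y) \<longleftrightarrow> inP v (int n) y"
  by (simp add: inPE_def)

end

section \<open>Representatives of \<open>O_F / p_F^k\<close>\<close>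

locale finite_residue_field = discrete_valued_field v for v :: "'f::field \<Rightarrow> int" +
  assumes finite_residue_field: "finite (residue_field v)"
begin

lemma equiv_resrel: "equiv (OF v) (resrel v)"
proof (rule equivI)
  show "resrel v \<subseteq> OF v \<times> OF v" "refl_on (OF v) (resrel v)"
    unfolding resrel_def refl_on_def by auto
  show "sym (resrel v)"
    unfolding sym_def resrel_def using inP_uminus_iff by fastforce
  show "trans (resrel v)"
  proof (rule transI)
    fix x y z assume "(x, y) \<in> resrel v" "(y, z) \<in> resrel v"
    then show "(x, z) \<in> resrel v"
      using inP_add[of 1 "x - y" "y - z"] unfolding resrel_def by simp
  qed
qed

definition residue_reps :: "'f set" where
  "residue_reps = (\<lambda>C. SOME x. x \<in> C) ` residue_field v"

lemma some_in_residue_class: "C \<in> residue_field v \<Longrightarrow> (SOME x. x \<in> C) \<in> C"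
  unfolding residue_field_def
  using in_quotient_imp_non_empty[OF equiv_resrel] by (simp add: some_in_eq)

lemma residue_reps_integral: "t \<in> residue_reps \<Longrightarrow> inP v 0 t"
  unfolding residue_reps_def using some_in_residue_class in_quotient_imp_subset[OF equiv_resrel]
  unfolding residue_field_def OF_def by blast

lemma card_residue_reps: "card residue_reps = resq v"
proof -
  have "inj_on (\<lambda>C. SOME x. x \<in> C) (residue_field v)"
  proof (rule inj_onI)
    fix C C' assume C: "C \<in> residue_field v" and C': "C' \<in> residue_field v"
      and "(SOME x. x \<in> C) = (SOME x. x \<in> C')"
    then have "(SOME x. x \<in> C) \<in> C \<inter> C'"
      using some_in_residue_class[OF C] some_in_residue_class[OF C'] by simp
    then show "C = C'"
      using quotient_disj[OF equiv_resrel] C C' unfolding residue_field_def by blast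
  qed
  then show ?thesis
    unfolding residue_reps_def resq_def by (rule card_image)
qed

lemma finite_residue_reps: "finite residue_reps"
  unfolding residue_reps_def using finite_residue_field by simp

lemma residue_reps_eq:
  assumes t: "t \<in> residue_reps" and t': "t' \<in> residue_reps" and "inP v 1 (t - t')"
  shows "t = t'"
proof -
  obtain C C' where C: "C \<in> residue_field v" "t = (SOME x. x \<in> C)"
    and C': "C' \<in> residue_field v" "t' = (SOME x. x \<in> C')"
    using t t' unfolding residue_reps_def by blast
  have "(t, t') \<in> resrel v"
    using assms residue_reps_integral unfolding resrel_def OF_def by auto
  then have "C = C'"
    using C C' some_in_residue_class quotient_eqI[OF equiv_resrel]
    unfolding residue_field_def by blast
  then show ?thesis using C C' by simp
qed

lemma residue_reps_complete: "inP v 0 y \<Longrightarrow> \<exists>t\<in>residue_reps. inP v 1 (y - t)"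
proof -
  assume "inP v 0 y"
  then have C: "resrel v `` {y} \<in> residue_field v"
    unfolding residue_field_def by (simp add: quotientI OF_def)
  then have "(SOME x. x \<in> resrel v `` {y}) \<in> resrel v `` {y}"
    by (rule some_in_residue_class)
  then show ?thesis
    using C unfolding residue_reps_def resrel_def by blast
qed

primrec reps_mod :: "nat \<Rightarrow> 'f set" where
  "reps_mod 0 = {0}"
| "reps_mod (Suc k) = (\<lambda>(s, t). s + unif ^ k * t) ` (reps_mod k \<times> residue_reps)"

lemma inP_unif_power_mult_integral: "inP v 0 t \<Longrightarrow> inP v (int k) (unif ^ k * t)"
  by (simp add: inP_unif_power_mult_iff)

lemma reps_mod_integral: "s \<in> reps_mod k \<Longrightarrow> inP v 0 s"
proof (induction k arbitrary: s)
  case (Suc k)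
  then obtain s0 t where st: "s0 \<in> reps_mod k" "t \<in> residue_reps" "s = s0 + unif ^ k * t"
    by auto
  have "inP v 0 (unif ^ k * t)"
    using inP_unif_power_mult_integral[OF residue_reps_integral[OF st(2)]] inP_mono[of 0 "int k"]
    by simp
  then show ?case
    using Suc.IH[OF st(1)] st(3) inP_add by simp
qed simp

lemma reps_mod_eq: "s \<in> reps_mod k \<Longrightarrow> s' \<in> reps_mod k \<Longrightarrow> inP v (int k) (s - s') \<Longrightarrow> s = s'"
proof (induction k arbitrary: s s')
  case (Suc k)
  obtain s0 t s0' t' where st: "s0 \<in> reps_mod k" "t \<in> residue_reps" "s = s0 + unif ^ k * t"
    and st': "s0' \<in> reps_mod k" "t' \<in> residue_reps" "s' = s0' + unif ^ k * t'"
    using Suc.prems by auto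
  have d: "s - s' = (s0 - s0') + unif ^ k * (t - t')"
    using st st' by (simp add: algebra_simps)
  have digit: "inP v (int k) (unif ^ k * (t - t'))"
    using st st' residue_reps_integral inP_diff inP_unif_power_mult_integral by blast
  have "inP v (int k) (s - s')"
    using Suc.prems(3) inP_mono[of "int k" "int (Suc k)"] by simp
  then have "inP v (int k) (s0 - s0')"
    using d digit inP_diff[of "int k" "s - s'" "unif ^ k * (t - t')"] by simp
  then have "s0 = s0'" using Suc.IH st st' by blast
  then have "inP v 1 (t - t')"
    using d Suc.prems(3) by (simp add: inP_unif_power_mult_iff)
  then show ?case
    using \<open>s0 = s0'\<close> residue_reps_eq st st' by blast
qed simp

lemma reps_mod_complete: "inP v 0 y \<Longrightarrow> \<exists>s\<in>reps_mod k. inP v (int k) (y - s)"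
proof (induction k)
  case (Suc k)
  then obtain s where s: "s \<in> reps_mod k" "inP v (int k) (y - s)" by blast
  define z where "z = (y - s) / unif ^ k"
  have yz: "y - s = unif ^ k * z"
    unfolding z_def using unif_nonzero by simp
  then have "inP v 0 z" using s(2) by (simp add: inP_unif_power_mult_iff)
  then obtain t where t: "t \<in> residue_reps" "inP v 1 (z - t)"
    using residue_reps_complete by blast
  have "y - (s + unif ^ k * t) = unif ^ k * (z - t)"
    using yz by (simp add: algebra_simps)
  then have "inP v (int (Suc k)) (y - (s + unif ^ k * t))"
    using t(2) by (simp add: inP_unif_power_mult_iff)
  moreover have "s + unif ^ k * t \<in> reps_mod (Suc k)" using s t by auto
  ultimately show ?case by blast
qed simp

lemma finite_reps_mod: "finite (reps_mod k)"
  by (induction k) (simp_all add: finite_residue_reps)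

lemma card_reps_mod: "card (reps_mod k) = resq v ^ k"
proof (induction k)
  case (Suc k)
  have "inj_on (\<lambda>(s, t). s + unif ^ k * t) (reps_mod k \<times> residue_reps)"
  proof (rule inj_onI, clarify)
    fix s t s' t' assume st: "s \<in> reps_mod k" "t \<in> residue_reps" "s' \<in> reps_mod k" "t' \<in> residue_reps"
      and e: "s + unif ^ k * t = s' + unif ^ k * t'"
    have "inP v (int k) (unif ^ k * (t' - t))"
      using st residue_reps_integral inP_diff inP_unif_power_mult_integral by blast
    moreover have "s - s' = unif ^ k * (t' - t)"
      using e by (simp add: algebra_simps)
    ultimately have "s = s'" using reps_mod_eq st by simp
    then show "s = s' \<and> t = t'" using e unif_nonzero by simp
  qed
  then show ?case
    using Suc card_residue_reps by (simp add: card_image card_cartesian_product)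
qed simp

definition reps_p_mod :: "nat \<Rightarrow> 'f set" where
  "reps_p_mod k = (\<lambda>s. unif * s) ` reps_mod (k - 1)"

lemma reps_p_mod_in_p: "x \<in> reps_p_mod k \<Longrightarrow> inP v 1 x"
  unfolding reps_p_mod_def
  using inP_unif_power_mult_integral[of _ 1] reps_mod_integral by auto

lemma reps_p_mod_eq:
  assumes "0 < k" "x \<in> reps_p_mod k" "x' \<in> reps_p_mod k" "inP v (int k) (x - x')"
  shows "x = x'"
proof -
  obtain s s' where s: "s \<in> reps_mod (k - 1)" "s' \<in> reps_mod (k - 1)" "x = unif * s" "x' = unif * s'"
    using assms(2,3) unfolding reps_p_mod_def by blast
  have "x - x' = unif ^ 1 * (s - s')" using s by (simp add: algebra_simps)
  then have "inP v (int (k - 1)) (s - s')"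
    using assms(1,4) inP_unif_power_mult_iff[of "int k" 1 "s - s'"] by (simp add: of_nat_diff)
  then show ?thesis using reps_mod_eq s by blast
qed

lemma reps_p_mod_complete:
  assumes "0 < k" "inP v 1 x"
  shows "\<exists>x0\<in>reps_p_mod k. inP v (int k) (x - x0)"
proof -
  define z where "z = x / unif"
  have xz: "x = unif ^ 1 * z" unfolding z_def using unif_nonzero by simp
  then have "inP v 0 z" using assms(2) inP_unif_power_mult_iff[of 1 1 z] by simp
  then obtain s where s: "s \<in> reps_mod (k - 1)" "inP v (int (k - 1)) (z - s)"
    using reps_mod_complete by blast
  have "x - unif * s = unif ^ 1 * (z - s)" using xz by (simp add: algebra_simps)
  then have "inP v (int k) (x - unif * s)"
    using s(2) assms(1) inP_unif_power_mult_iff[of "int k" 1 "z - s"] by (simp add: of_nat_diff)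
  moreover have "unif * s \<in> reps_p_mod k" unfolding reps_p_mod_def using s by blast
  ultimately show ?thesis by blast
qed

lemma finite_reps_p_mod: "finite (reps_p_mod k)"
  by (simp add: reps_p_mod_def finite_reps_mod)

lemma card_reps_p_mod: "card (reps_p_mod k) = resq v ^ (k - 1)"
proof -
  have "inj_on (\<lambda>s. unif * s) (reps_mod (k - 1))"
    using unif_nonzero by (auto intro: inj_onI)
  then show ?thesis
    unfolding reps_p_mod_def by (simp add: card_image card_reps_mod)
qed

lemma residue_class_plus_one:
  assumes "x \<in> OF v"
  shows "(\<lambda>z. z + 1) ` (resrel v `` {x}) = resrel v `` {x + 1}"
proof -
  have integral_plus_one: "inP v 0 (z + 1) \<longleftrightarrow> inP v 0 z" for z
    using inP_add[of 0 "z + 1" "- 1"] inP_add[of 0 z 1] by (auto simp: inP_1_iff)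
  have shift: "z \<in> resrel v `` {x + 1} \<longleftrightarrow> z - 1 \<in> resrel v `` {x}" for z
    using assms integral_plus_one[of x] integral_plus_one[of "z - 1"]
    by (simp add: resrel_def OF_def algebra_simps)
  show ?thesis
  proof (rule set_eqI)
    fix z
    have "z \<in> (\<lambda>z. z + 1) ` (resrel v `` {x}) \<longleftrightarrow> z - 1 \<in> resrel v `` {x}"
      by (auto intro: image_eqI[of z _ "z - 1"])
    then show "z \<in> (\<lambda>z. z + 1) ` (resrel v `` {x}) \<longleftrightarrow> z \<in> resrel v `` {x + 1}"
      using shift by simp
  qed
qed

text \<open>If \<open>2 = 0\<close>, translation by 1 pairs off the residue classes.\<close>

lemma two_nonzero_if_odd_resq:
  assumes "odd (resq v)"
  shows "(2::'f) \<noteq> 0"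
proof
  assume two: "(2::'f) = 0"
  let ?shift = "\<lambda>C. (\<lambda>z. z + 1) ` C"
  have "?shift C \<in> residue_field v \<and> ?shift (?shift C) = C \<and> ?shift C \<noteq> C"
    if C: "C \<in> residue_field v" for C
  proof -
    obtain x where x: "x \<in> OF v" "C = resrel v `` {x}"
      using C unfolding residue_field_def by (auto elim: quotientE)
    have shift: "?shift C = resrel v `` {x + 1}"
      using residue_class_plus_one x by simp
    have x1: "x + 1 \<in> OF v"
      using x(1) inP_add[of 0 x 1] by (simp add: OF_def inP_1_iff)
    have "?shift (?shift C) = (\<lambda>z. z + 2) ` C"
      by (simp add: image_image add.assoc one_add_one)
    also have "\<dots> = C" using two by simp
    finally have "?shift (?shift C) = C" .
    moreover have "?shift C \<noteq> C"
    proof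
      assume "?shift C = C"
      then have "x + 1 \<in> C"
        using shift equiv_class_self[OF equiv_resrel x1] by simp
      then have "inP v 1 (x - (x + 1))"
        using x(2) by (simp add: resrel_def)
      then show False by (simp add: inP_1_iff)
    qed
    ultimately show ?thesis
      using shift x1 unfolding residue_field_def by (simp add: quotientI)
  qed
  then have "even (card (residue_field v))"
    using even_card_fixpoint_free_involution[OF finite_residue_field] by blast
  with assms show False by (simp add: resq_def)
qed

end

section \<open>The quadratic algebra \<open>F[\<surd>\<epsilon>]\<close> and \<open>2 \<times> 2\<close> matrices over it\<close>

notation eadd (infixl "\<oplus>" 65) and esub (infixl "\<ominus>" 65)

lemmas E_defs = emul_def eadd_def esub_def econj_def ezero_def eone_def enorm_def

definition minv :: "'f::field qe m2 \<Rightarrow> 'f qe m2" where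
  "minv g = M2 (econj (m22 g)) (econj (m12 g)) (econj (m21 g)) (econj (m11 g))"

lemma eadd_ezero [simp]: "x \<oplus> ezero = x" "ezero \<oplus> x = x"
  by (simp_all add: E_defs)

lemma esub_self [simp]: "x \<ominus> x = ezero"
  by (simp add: E_defs)

lemma esub_eq_ezero_iff: "x \<ominus> y = ezero \<longleftrightarrow> x = y"
  by (cases x; cases y) (simp add: E_defs)

lemma econj_econj [simp]: "econj (econj x) = x"
  by (simp add: E_defs)

lemma ezero_neq_eone [simp]: "ezero \<noteq> eone" "eone \<noteq> ezero"
  by (simp_all add: E_defs)

lemma econj_eone [simp]: "econj eone = eone" and econj_ezero [simp]: "econj ezero = ezero"
  by (simp_all add: E_defs)

lemma econj_esub: "econj (a \<ominus> b) = econj a \<ominus> econj b"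
  by (simp add: E_defs)

locale quadratic_algebra =
  fixes eps :: "'f::field"
begin

abbreviation times_E (infixl "\<otimes>" 70) where "x \<otimes> y \<equiv> emul eps x y"

lemma emul_commute: "x \<otimes> y = y \<otimes> x"
  by (simp add: E_defs algebra_simps)

lemma emul_eone [simp]: "x \<otimes> eone = x" "eone \<otimes> x = x"
  by (simp_all add: E_defs)

lemma emul_ezero [simp]: "x \<otimes> ezero = ezero" "ezero \<otimes> x = ezero"
  by (simp_all add: E_defs)

lemma enorm_emul: "enorm eps (x \<otimes> y) = enorm eps x * enorm eps y"
  by (simp add: E_defs algebra_simps)

lemma mmul_assoc: "mmul eps (mmul eps a b) c = mmul eps a (mmul eps b c)"
  by (cases a; cases b; cases c) (simp add: mmul_def E_defs algebra_simps)

lemma mmul_mid [simp]: "mmul eps mid g = g" "mmul eps g mid = g"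
  by (cases g; simp add: mmul_def mid_def)+

lemma mconjT_mid [simp]: "mconjT mid = mid"
  by (simp add: mconjT_def mid_def)

lemma mconjT_wmat [simp]: "mconjT wmat = wmat"
  by (simp add: mconjT_def wmat_def)

lemma mconjT_mconjT [simp]: "mconjT (mconjT g) = g"
  by (cases g) (simp add: mconjT_def)

lemma minv_eq_wmat_mconjT: "minv g = mmul eps wmat (mmul eps (mconjT g) wmat)"
  by (cases g) (simp add: minv_def mmul_def mconjT_def wmat_def E_defs)

lemma wmat_wmat [simp]: "mmul eps wmat wmat = mid"
  by (simp add: mmul_def wmat_def mid_def E_defs)

lemma wmat_wmat_mmul [simp]: "mmul eps wmat (mmul eps wmat g) = g"
  by (simp flip: mmul_assoc)

lemma mdet_mmul: "mdet eps (mmul eps g h) = mdet eps g \<otimes> mdet eps h"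
  by (cases g; cases h) (simp add: mdet_def mmul_def E_defs algebra_simps)

lemma mconjT_mmul: "mconjT (mmul eps g h) = mmul eps (mconjT h) (mconjT g)"
  by (cases g; cases h) (simp add: mconjT_def mmul_def E_defs algebra_simps)

lemma inG_M2: "inG eps (M2 a b c d) \<longleftrightarrow> a \<otimes> d \<ominus> b \<otimes> c \<noteq> ezero \<and>
   econj c \<otimes> a \<oplus> econj a \<otimes> c = ezero \<and> econj c \<otimes> b \<oplus> econj a \<otimes> d = eone \<and>
   econj d \<otimes> a \<oplus> econj b \<otimes> c = eone \<and> econj d \<otimes> b \<oplus> econj b \<otimes> d = ezero"
  by (simp add: inG_def mdet_def mmul_def mconjT_def wmat_def)

lemma mdet_nonzero_if_unitary:
  assumes "mmul eps (mmul eps (mconjT g) wmat) g = wmat"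
  shows "mdet eps g \<noteq> ezero"
proof
  assume "mdet eps g = ezero"
  then have "mdet eps wmat = ezero"
    using arg_cong[OF assms, of "mdet eps"] by (simp add: mdet_mmul)
  then show False by (simp add: mdet_def wmat_def E_defs)
qed

lemma inG_iff_unitary: "inG eps g \<longleftrightarrow> mmul eps (mmul eps (mconjT g) wmat) g = wmat"
  using mdet_nonzero_if_unitary by (auto simp: inG_def)

lemma inG_mdet: "inG eps g \<Longrightarrow> mdet eps g \<noteq> ezero"
  by (simp add: inG_def)

lemma inG_mid: "inG eps mid"
  by (simp add: inG_iff_unitary)

lemma minv_mmul: "inG eps g \<Longrightarrow> mmul eps (minv g) g = mid"
  by (cases g) (simp add: inG_M2 minv_def mmul_def mid_def)

lemma inG_mmul:
  assumes g: "inG eps g" and h: "inG eps h"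
  shows "inG eps (mmul eps g h)"
proof -
  have "mmul eps (mmul eps (mconjT (mmul eps g h)) wmat) (mmul eps g h)
      = mmul eps (mconjT h) (mmul eps (mmul eps (mmul eps (mconjT g) wmat) g) h)"
    by (simp add: mconjT_mmul mmul_assoc)
  also have "\<dots> = wmat"
    using g h by (simp add: inG_iff_unitary flip: mmul_assoc)
  finally show ?thesis
    by (simp add: inG_iff_unitary)
qed

lemma m11_mmul_upper: "m21 h = ezero \<Longrightarrow> m11 (mmul eps g h) = m11 g \<otimes> m11 h"
  by (cases g; cases h) (simp add: mmul_def)

lemma inB_mmul:
  assumes "inB eps g" "inB eps h"
  shows "inB eps (mmul eps g h)"
proof -
  have "m21 (mmul eps g h) = ezero"
    using assms by (cases g; cases h) (simp add: inB_def mmul_def)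
  then show ?thesis using assms inG_mmul by (simp add: inB_def)
qed

lemma inB_m11_nonzero: "inB eps g \<Longrightarrow> m11 g \<noteq> ezero"
  by (cases g) (auto simp: inB_def inG_M2)

lemma inB_mid: "inB eps mid"
  by (simp add: inB_def inG_mid) (simp add: mid_def)

end

locale quadratic_field = quadratic_algebra +
  assumes eps_nonsquare: "\<nexists>y. y * y = eps"
begin

lemma eps_nonzero: "eps \<noteq> 0"
  using eps_nonsquare by auto

lemma enorm_eq_zero_iff: "enorm eps z = 0 \<longleftrightarrow> z = ezero"
proof
  assume norm: "enorm eps z = 0"
  obtain a b where z: "z = (a, b)" by fastforce
  have ab: "a * a = eps * b * b" using norm by (simp add: z enorm_def)
  show "z = ezero"
  proof (cases "b = 0")
    case False
    then have "(a / b) * (a / b) = eps" using ab by (simp add: field_simps)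
    then show ?thesis using eps_nonsquare by blast
  qed (use ab in \<open>simp add: z ezero_def\<close>)
qed (simp add: E_defs)

lemma emul_eq_ezero_iff: "x \<otimes> y = ezero \<longleftrightarrow> x = ezero \<or> y = ezero"
  using enorm_emul[of x y] by (auto simp flip: enorm_eq_zero_iff)

lemma row_mult_cancel:
  assumes "x \<otimes> a \<oplus> y \<otimes> c = x' \<otimes> a \<oplus> y' \<otimes> c" "x \<otimes> b \<oplus> y \<otimes> d = x' \<otimes> b \<oplus> y' \<otimes> d"
    and det: "a \<otimes> d \<ominus> b \<otimes> c \<noteq> ezero"
  shows "x = x' \<and> y = y'"
proof -
  let ?u = "(x \<otimes> a \<oplus> y \<otimes> c) \<ominus> (x' \<otimes> a \<oplus> y' \<otimes> c)"
    and ?w = "(x \<otimes> b \<oplus> y \<otimes> d) \<ominus> (x' \<otimes> b \<oplus> y' \<otimes> d)"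
  have "(x \<ominus> x') \<otimes> (a \<otimes> d \<ominus> b \<otimes> c) = d \<otimes> ?u \<ominus> c \<otimes> ?w"
    "(y \<ominus> y') \<otimes> (a \<otimes> d \<ominus> b \<otimes> c) = a \<otimes> ?w \<ominus> b \<otimes> ?u"
    by (simp_all add: E_defs algebra_simps)
  then have "(x \<ominus> x') \<otimes> (a \<otimes> d \<ominus> b \<otimes> c) = ezero" "(y \<ominus> y') \<otimes> (a \<otimes> d \<ominus> b \<otimes> c) = ezero"
    using assms(1,2) by simp_all
  then show ?thesis
    using det by (simp add: emul_eq_ezero_iff esub_eq_ezero_iff)
qed

lemma mmul_eq_right_imp_mid:
  assumes "mmul eps P g = g" "mdet eps g \<noteq> ezero"
  shows "P = mid"
proof -
  obtain p11 p12 p21 p22 a b c d where P: "P = M2 p11 p12 p21 p22" and g: "g = M2 a b c d"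
    by (cases P; cases g) blast
  have rows: "p11 \<otimes> a \<oplus> p12 \<otimes> c = a" "p11 \<otimes> b \<oplus> p12 \<otimes> d = b"
    "p21 \<otimes> a \<oplus> p22 \<otimes> c = c" "p21 \<otimes> b \<oplus> p22 \<otimes> d = d"
    using assms(1) by (simp_all add: P g mmul_def)
  have det: "a \<otimes> d \<ominus> b \<otimes> c \<noteq> ezero"
    using assms(2) by (simp add: g mdet_def)
  have "p11 = eone \<and> p12 = ezero" "p21 = ezero \<and> p22 = eone"
    by (rule row_mult_cancel[OF _ _ det]; simp add: rows)+
  then show ?thesis by (simp add: P mid_def)
qed

lemma mmul_minv: "inG eps g \<Longrightarrow> mmul eps g (minv g) = mid"
  using mmul_eq_right_imp_mid[of "mmul eps g (minv g)" g]
  by (simp add: mmul_assoc minv_mmul inG_mdet)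

lemma minv_mmul_cancel: "inG eps g \<Longrightarrow> mmul eps (minv g) (mmul eps g h) = h"
  by (simp add: minv_mmul flip: mmul_assoc)

lemma mmul_minv_cancel: "inG eps g \<Longrightarrow> mmul eps g (mmul eps (minv g) h) = h"
  by (simp add: mmul_minv flip: mmul_assoc)

lemma inG_minv:
  assumes g: "inG eps g"
  shows "inG eps (minv g)"
proof -
  have "mmul eps g (mmul eps wmat (mmul eps (mconjT g) wmat)) = mid"
    using mmul_minv[OF g] by (simp add: minv_eq_wmat_mconjT)
  then show ?thesis
    by (simp add: inG_iff_unitary minv_eq_wmat_mconjT mconjT_mmul mmul_assoc)
qed

lemma inB_minv: "inB eps g \<Longrightarrow> inB eps (minv g)"
  by (simp add: inB_def inG_minv) (simp add: minv_def)

end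

locale quadratic_extension = quadratic_field eps + discrete_valued_field v
  for eps :: "'f::field" and v :: "'f \<Rightarrow> int" +
  assumes val_eps: "v eps = 0"
begin

lemma inPE_emul: "inPE v n a \<Longrightarrow> inOE v b \<Longrightarrow> inPE v n (a \<otimes> b)"
proof -
  assume a: "inPE v n a" and b: "inOE v b"
  have "inP v (int n) (eps * snd a)"
    using a inP_mult[of 0 eps "int n"] val_eps by (simp add: inPE_def inP_def)
  then have "inP v (int n) (fst a * fst b)" "inP v (int n) (eps * snd a * snd b)"
    "inP v (int n) (fst a * snd b)" "inP v (int n) (snd a * fst b)"
    using a b by (simp_all add: inPE_def inOE_def inP_mult_integral)
  then show ?thesis
    by (simp add: inPE_def emul_def inP_add)
qed

lemma inPE_emul': "inOE v a \<Longrightarrow> inPE v n b \<Longrightarrow> inPE v n (a \<otimes> b)"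
  using inPE_emul[of n b a] by (simp add: emul_commute)

lemma inOE_emul: "inOE v a \<Longrightarrow> inOE v b \<Longrightarrow> inOE v (a \<otimes> b)"
  unfolding inOE_def by (rule inPE_emul) (simp_all add: inOE_def)

lemmas E_ideal_closure = inPE_eadd inPE_esub inPE_emul inPE_emul' inOE_emul
  inPE_eadd[of 0, folded inOE_def] inPE_esub[of 0, folded inOE_def] inPE_econj_iff[of 0, folded inOE_def]

lemma inOE_eone [simp]: "inOE v eone" and inOE_ezero [simp]: "inOE v ezero"
  by (simp_all add: inOE_def inPE_def eone_def ezero_def inP_1_iff)

lemma inK_M2: "inK v eps (M2 a b c d) \<longleftrightarrow>
    inG eps (M2 a b c d) \<and> inOE v a \<and> inOE v b \<and> inOE v c \<and> inOE v d"
  by (simp add: inK_def)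

lemma inKn_M2: "inKn v eps n (M2 a b c d) \<longleftrightarrow> inK v eps (M2 a b c d) \<and>
    inPE v n (a \<ominus> eone) \<and> inPE v n b \<and> inPE v n c \<and> inPE v n (d \<ominus> eone)"
  by (simp add: inKn_def)

lemma inKn_inK: "inKn v eps n g \<Longrightarrow> inK v eps g"
  by (simp add: inKn_def)

lemma inK_inG: "inK v eps g \<Longrightarrow> inG eps g"
  by (simp add: inK_def)

lemma inKn_mono: "m \<le> n \<Longrightarrow> inKn v eps n g \<Longrightarrow> inKn v eps m g"
  using inPE_mono by (auto simp: inKn_def)

lemma inKn_mid: "inKn v eps n mid"
  by (simp add: inKn_def inK_def inG_mid) (simp add: mid_def)

lemma inK_mmul: "inK v eps g \<Longrightarrow> inK v eps h \<Longrightarrow> inK v eps (mmul eps g h)"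
  using inG_mmul[of g h]
  by (cases g; cases h) (simp add: inK_def, simp add: mmul_def E_ideal_closure)

lemma inK_minv: "inK v eps g \<Longrightarrow> inK v eps (minv g)"
  using inG_minv[of g]
  by (cases g) (simp add: inK_def, simp add: minv_def E_ideal_closure)

lemma inKn_minv: "inKn v eps n g \<Longrightarrow> inKn v eps n (minv g)"
proof -
  have conj_sub_one: "econj x \<ominus> eone = econj (x \<ominus> eone)" for x
    by (simp add: econj_esub)
  show "inKn v eps n g \<Longrightarrow> inKn v eps n (minv g)"
    using inK_minv[of g] by (cases g) (simp add: inKn_def minv_def conj_sub_one)
qed

lemma inKn_mmul:
  assumes g: "inKn v eps n g" and h: "inKn v eps n h"
  shows "inKn v eps n (mmul eps g h)"
proof -
  obtain a b c d a' b' c' d' where gh: "g = M2 a b c d" "h = M2 a' b' c' d'"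
    by (cases g; cases h) blast
  have o: "inOE v a" "inOE v d" "inOE v a'" "inOE v d'"
    using g h by (simp_all add: gh inKn_M2 inK_M2)
  have p: "inPE v n (a \<ominus> eone)" "inPE v n b" "inPE v n c" "inPE v n (d \<ominus> eone)"
     "inPE v n (a' \<ominus> eone)" "inPE v n b'" "inPE v n c'" "inPE v n (d' \<ominus> eone)"
    using g h by (simp_all add: gh inKn_M2)
  have "a \<otimes> a' \<oplus> b \<otimes> c' \<ominus> eone = (a \<ominus> eone) \<otimes> a' \<oplus> (a' \<ominus> eone) \<oplus> b \<otimes> c'"
    "c \<otimes> b' \<oplus> d \<otimes> d' \<ominus> eone = c \<otimes> b' \<oplus> (d \<ominus> eone) \<otimes> d' \<oplus> (d' \<ominus> eone)"
    by (simp_all add: E_defs algebra_simps)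
  then show ?thesis
    using inK_mmul[OF inKn_inK[OF g] inKn_inK[OF h]] o p inPE_inOE
    by (simp add: gh inKn_def mmul_def E_ideal_closure)
qed

end

section \<open>Double cosets \<open>B \<backslash> G / \<K>\<^sub>n\<close>\<close>

definition lower_unip :: "'f::field \<Rightarrow> 'f qe m2" where
  "lower_unip y = M2 eone ezero (0, y) eone"

definition upper_unip :: "'f::field \<Rightarrow> 'f qe m2" where
  "upper_unip x = M2 eone (0, x) ezero eone"

definition w_unip :: "'f::field \<Rightarrow> 'f qe m2" where
  "w_unip x = M2 ezero eone eone (0, x)"

context quadratic_extension
begin

lemma inOE_pure_iff [simp]: "inOE v (0, y) \<longleftrightarrow> inP v 0 y"
  by (simp add: inOE_def)

lemma lower_unip_inK: "inP v 0 y \<Longrightarrow> inK v eps (lower_unip y)"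
  by (simp add: lower_unip_def inK_M2 inG_M2) (simp add: E_defs)

lemma upper_unip_inK: "inP v 0 x \<Longrightarrow> inK v eps (upper_unip x)"
  by (simp add: upper_unip_def inK_M2 inG_M2) (simp add: E_defs)

lemma w_unip_inK: "inP v 0 x \<Longrightarrow> inK v eps (w_unip x)"
  by (simp add: w_unip_def inK_M2 inG_M2) (simp add: E_defs)

lemma lower_unip_inKn: "inP v (int n) y \<Longrightarrow> inKn v eps n (lower_unip y)"
  using lower_unip_inK[of y] inP_mono[of 0 "int n" y]
  by (simp add: inKn_def) (simp add: lower_unip_def)

lemma upper_unip_inKn: "inP v (int n) x \<Longrightarrow> inKn v eps n (upper_unip x)"
  using upper_unip_inK[of x] inP_mono[of 0 "int n" x]
  by (simp add: inKn_def) (simp add: upper_unip_def)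

lemma lower_unip_diff: "lower_unip y = mmul eps (lower_unip y0) (lower_unip (y - y0))"
  by (simp add: lower_unip_def mmul_def E_defs)

lemma w_unip_diff: "w_unip x = mmul eps (w_unip x0) (upper_unip (x - x0))"
  by (simp add: w_unip_def upper_unip_def mmul_def E_defs)

lemma isotropic_cases:
  assumes two: "(2::'f) \<noteq> 0"
    and iso: "c \<otimes> econj d \<oplus> d \<otimes> econj c = ezero" and nz: "c \<noteq> ezero \<or> d \<noteq> ezero"
  shows "(\<exists>y. inP v 0 y \<and> c = (0, y) \<otimes> d) \<or> (\<exists>x. inP v 1 x \<and> d = (0, x) \<otimes> c)"
proof (cases "d = ezero")
  case True
  then show ?thesis by (intro disjI2 exI[of _ 0]) (simp add: E_defs)
next
  case False
  obtain c1 c2 d1 d2 where cd: "c = (c1, c2)" "d = (d1, d2)" by fastforce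
  have "2 * (c1 * d1 - eps * c2 * d2) = fst (c \<otimes> econj d \<oplus> d \<otimes> econj c)"
    by (simp add: cd E_defs algebra_simps)
  then have real_part: "c1 * d1 - eps * c2 * d2 = 0"
    using iso two by (simp add: ezero_def)
  define N where "N = enorm eps d"
  have N: "N \<noteq> 0" using False by (simp add: N_def enorm_eq_zero_iff)
  define y where "y = (c2 * d1 - c1 * d2) / N"
  have "c1 * N = eps * d2 * (c2 * d1 - c1 * d2)" "c2 * N = d1 * (c2 * d1 - c1 * d2)"
    using real_part unfolding N_def cd enorm_def fst_conv snd_conv by algebra+
  then have "c1 = eps * y * d2" "c2 = y * d1"
    using N by (simp_all add: y_def field_simps)
  then have cy: "c = (0, y) \<otimes> d" by (simp add: cd E_defs)
  show ?thesis
  proof (cases "inP v 0 y")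
    case False
    then have y: "y \<noteq> 0" "v y < 0" by (auto simp: inP_def)
    define x where "x = inverse (eps * y)"
    have "v x = - v y"
      unfolding x_def using val_inverse[of "eps * y"] val_mult[of eps y] eps_nonzero y val_eps by simp
    then have "inP v 1 x" using y by (simp add: inP_def)
    moreover have "d = (0, x) \<otimes> c"
      using cy eps_nonzero y by (simp add: cd x_def E_defs field_simps)
    ultimately show ?thesis by blast
  qed (use cy in blast)
qed

lemma inB_cases: "inB eps X \<Longrightarrow> \<exists>\<alpha> \<beta> \<delta>. X = M2 \<alpha> \<beta> ezero \<delta>"
  by (cases X) (auto simp: inB_def)

lemma inKn_cases:
  assumes "inKn v eps n m"
  obtains p q r s where "m = M2 p q r s"
    "inOE v p" "inOE v q" "inOE v r" "inOE v s"
    "inPE v n (p \<ominus> eone)" "inPE v n q" "inPE v n r" "inPE v n (s \<ominus> eone)"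
  using assms by (cases m) (simp add: inKn_M2 inK_M2)

lemma lower_unip_double_coset_eq:
  assumes X: "inB eps X" and m: "inKn v eps n m" and y: "inP v 0 y" "inP v 0 y'"
    and eq: "mmul eps X (lower_unip y) = mmul eps (lower_unip y') m"
  shows "inP v (int n) (y - y') \<and> inPE v n (m11 X \<ominus> eone)"
proof -
  obtain \<alpha> \<beta> \<delta> where XX: "X = M2 \<alpha> \<beta> ezero \<delta>" using inB_cases[OF X] by blast
  obtain p q r s where mm: "m = M2 p q r s"
    and mp: "inPE v n (p \<ominus> eone)" "inPE v n q" "inPE v n r" "inPE v n (s \<ominus> eone)"
    using inKn_cases[OF m] by metis
  have E: "\<alpha> \<oplus> \<beta> \<otimes> (0, y) = p" "\<beta> = q" "\<delta> \<otimes> (0, y) = (0, y') \<otimes> p \<oplus> r"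
    "\<delta> = (0, y') \<otimes> q \<oplus> s"
    using eq by (auto simp: XX mm lower_unip_def mmul_def)
  have "\<alpha> \<ominus> eone = (\<alpha> \<oplus> \<beta> \<otimes> (0, y) \<ominus> eone) \<ominus> \<beta> \<otimes> (0, y)"
    by (simp add: E_defs algebra_simps)
  also have "\<dots> = (p \<ominus> eone) \<ominus> q \<otimes> (0, y)" by (simp only: E(1)) (simp only: E(2))
  finally have \<alpha>: "inPE v n (\<alpha> \<ominus> eone)" using mp y by (simp add: E_ideal_closure)
  have "\<delta> \<ominus> eone = (0, y') \<otimes> q \<oplus> (s \<ominus> eone)"
    by (subst E(4)) (simp add: E_defs algebra_simps)
  then have \<delta>: "inPE v n (\<delta> \<ominus> eone)" using mp y by (simp add: E_ideal_closure)
  have "(0, y') \<otimes> (p \<ominus> eone) \<oplus> r \<ominus> (\<delta> \<ominus> eone) \<otimes> (0, y)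
      = ((0, y') \<otimes> p \<oplus> r) \<ominus> \<delta> \<otimes> (0, y) \<oplus> (0, y) \<ominus> (0, y')"
    by (simp add: E_defs algebra_simps)
  also have "\<dots> = (0, y) \<ominus> (0, y')" by (simp only: E(3) esub_self eadd_ezero)
  finally have "inPE v n ((0, y) \<ominus> (0, y'))"
    using mp y \<delta> by (metis E_ideal_closure inOE_pure_iff)
  then show ?thesis using \<alpha> by (simp add: XX esub_def)
qed

lemma w_unip_double_coset_eq:
  assumes X: "inB eps X" and m: "inKn v eps n m" and x: "inP v 0 x" "inP v 0 x'"
    and eq: "mmul eps X (w_unip x) = mmul eps (w_unip x') m"
  shows "inP v (int n) (x - x') \<and> inPE v n (m11 X \<ominus> eone)"
proof -
  obtain \<alpha> \<beta> \<delta> where XX: "X = M2 \<alpha> \<beta> ezero \<delta>" using inB_cases[OF X] by blast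
  obtain p q r s where mm: "m = M2 p q r s"
    and mp: "inPE v n (p \<ominus> eone)" "inPE v n q" "inPE v n r" "inPE v n (s \<ominus> eone)"
    using inKn_cases[OF m] by metis
  have E: "\<beta> = r" "\<alpha> \<oplus> \<beta> \<otimes> (0, x) = s" "\<delta> = p \<oplus> (0, x') \<otimes> r"
    "\<delta> \<otimes> (0, x) = q \<oplus> (0, x') \<otimes> s"
    using eq by (auto simp: XX mm w_unip_def mmul_def)
  have "\<alpha> \<ominus> eone = (\<alpha> \<oplus> \<beta> \<otimes> (0, x) \<ominus> eone) \<ominus> \<beta> \<otimes> (0, x)"
    by (simp add: E_defs algebra_simps)
  also have "\<dots> = (s \<ominus> eone) \<ominus> r \<otimes> (0, x)" by (simp only: E(2)) (simp only: E(1))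
  finally have \<alpha>: "inPE v n (\<alpha> \<ominus> eone)" using mp x by (simp add: E_ideal_closure)
  have "\<delta> \<ominus> eone = (p \<ominus> eone) \<oplus> (0, x') \<otimes> r"
    by (subst E(3)) (simp add: E_defs algebra_simps)
  then have \<delta>: "inPE v n (\<delta> \<ominus> eone)" using mp x by (simp add: E_ideal_closure)
  have "q \<oplus> (0, x') \<otimes> (s \<ominus> eone) \<ominus> (\<delta> \<ominus> eone) \<otimes> (0, x)
      = (q \<oplus> (0, x') \<otimes> s) \<ominus> \<delta> \<otimes> (0, x) \<oplus> (0, x) \<ominus> (0, x')"
    by (simp add: E_defs algebra_simps)
  also have "\<dots> = (0, x) \<ominus> (0, x')" by (simp only: E(4) esub_self eadd_ezero)
  finally have "inPE v n ((0, x) \<ominus> (0, x'))"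
    using mp x \<delta> by (metis E_ideal_closure inOE_pure_iff)
  then show ?thesis using \<alpha> by (simp add: XX esub_def)
qed

text \<open>In both mixed cases some entry of \<open>m\<close> would be congruent to both 0 and 1 modulo \<open>p\<^sub>E\<close>.\<close>

lemma lower_w_unip_double_coset_neq:
  assumes X: "inB eps X" and m: "inKn v eps 1 m" and y: "inP v 0 y" and x': "inP v 1 x'"
  shows "mmul eps X (lower_unip y) \<noteq> mmul eps (w_unip x') m"
proof
  assume eq: "mmul eps X (lower_unip y) = mmul eps (w_unip x') m"
  obtain \<alpha> \<beta> \<delta> where XX: "X = M2 \<alpha> \<beta> ezero \<delta>" using inB_cases[OF X] by blast
  obtain p q r s where mm: "m = M2 p q r s" and mo: "inOE v r" "inOE v s"
    and mp: "inPE v 1 (p \<ominus> eone)" "inPE v 1 q"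
    using inKn_cases[OF m] by metis
  have E: "\<delta> \<otimes> (0, y) = p \<oplus> (0, x') \<otimes> r" "\<delta> = q \<oplus> (0, x') \<otimes> s"
    using eq by (auto simp: XX mm lower_unip_def w_unip_def mmul_def)
  have \<delta>: "inPE v 1 \<delta>" using E(2) mp mo x' by (simp add: E_ideal_closure)
  have "\<delta> \<otimes> (0, y) \<ominus> (0, x') \<otimes> r \<ominus> (p \<ominus> eone)
      = (p \<oplus> (0, x') \<otimes> r) \<ominus> (0, x') \<otimes> r \<ominus> (p \<ominus> eone)"
    by (simp only: E(1))
  also have "\<dots> = eone" by (simp add: E_defs algebra_simps)
  finally have "inPE v 1 eone"
    using \<delta> y x' mp mo by (metis E_ideal_closure inOE_pure_iff inPE_pure_iff of_nat_1)
  then show False by (simp add: inPE_eone_iff)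
qed

lemma w_lower_unip_double_coset_neq:
  assumes X: "inB eps X" and m: "inKn v eps 1 m" and x: "inP v 1 x" and y': "inP v 0 y'"
  shows "mmul eps X (w_unip x) \<noteq> mmul eps (lower_unip y') m"
proof
  assume eq: "mmul eps X (w_unip x) = mmul eps (lower_unip y') m"
  obtain \<alpha> \<beta> \<delta> where XX: "X = M2 \<alpha> \<beta> ezero \<delta>" using inB_cases[OF X] by blast
  obtain p q r s where mm: "m = M2 p q r s" and mo: "inOE v p" "inOE v r"
    and mp: "inPE v 1 q" "inPE v 1 (s \<ominus> eone)"
    using inKn_cases[OF m] by metis
  have E: "\<delta> = (0, y') \<otimes> p \<oplus> r" "\<delta> \<otimes> (0, x) = (0, y') \<otimes> q \<oplus> s"
    using eq by (auto simp: XX mm lower_unip_def w_unip_def mmul_def)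
  have \<delta>: "inOE v \<delta>" using E(1) mo y' by (simp add: E_ideal_closure)
  have "\<delta> \<otimes> (0, x) \<ominus> (0, y') \<otimes> q \<ominus> (s \<ominus> eone)
      = ((0, y') \<otimes> q \<oplus> s) \<ominus> (0, y') \<otimes> q \<ominus> (s \<ominus> eone)"
    by (simp only: E(2))
  also have "\<dots> = eone" by (simp add: E_defs algebra_simps)
  finally have "inPE v 1 eone"
    using \<delta> x y' mp by (metis E_ideal_closure inOE_pure_iff inPE_pure_iff of_nat_1)
  then show False by (simp add: inPE_eone_iff)
qed

end

section \<open>A basis of the \<open>\<K>\<^sub>n\<close>-fixed vectors\<close>

interpretation cvs: vector_space "cscale :: complex \<Rightarrow> ('a \<Rightarrow> complex) \<Rightarrow> ('a \<Rightarrow> complex)"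
  by unfold_locales (simp_all add: cscale_def fun_eq_iff algebra_simps)

lemma sum_apply: "(\<Sum>i\<in>A. F i) x = (\<Sum>i\<in>A. F i x :: complex)"
  by (induction A rule: infinite_finite_induct) auto

lemma dim_eq_card_if_delta_basis:
  fixes e :: "'a \<Rightarrow> 'a \<Rightarrow> complex"
  assumes R: "finite R" and eV: "e ` R \<subseteq> V"
    and delta: "\<And>k k'. k \<in> R \<Longrightarrow> k' \<in> R \<Longrightarrow> e k k' = (if k' = k then 1 else 0)"
    and expansion: "\<And>f. f \<in> V \<Longrightarrow> f = (\<Sum>k\<in>R. cscale (f k) (e k))"
  shows "cvs.dim V = card R"
proof -
  have "V \<subseteq> cvs.span (e ` R)"
  proof
    fix f assume "f \<in> V"
    have "(\<Sum>k\<in>R. cscale (f k) (e k)) \<in> cvs.span (e ` R)"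
      by (intro cvs.span_sum cvs.span_scale cvs.span_base) simp
    then show "f \<in> cvs.span (e ` R)" using expansion[OF \<open>f \<in> V\<close>] by simp
  qed
  then have span: "cvs.span (e ` R) = cvs.span V"
    using cvs.span_mono[OF eV] cvs.span_minimal[OF _ cvs.subspace_span] by blast
  have "\<not> cvs.dependent (e ` R)"
  proof
    assume "cvs.dependent (e ` R)"
    then obtain t u w0 where t: "finite t" "t \<subseteq> e ` R" "(\<Sum>w\<in>t. cscale (u w) w) = 0"
      and w0: "w0 \<in> t" "u w0 \<noteq> 0"
      unfolding cvs.dependent_explicit by blast
    obtain k0 where k0: "k0 \<in> R" "w0 = e k0" using t(2) w0(1) by blast
    have "u w * w k0 = 0" if w: "w \<in> t - {w0}" for w
    proof -
      obtain k where "k \<in> R" "w = e k" using w t(2) by blast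
      then show ?thesis using w k0 delta by auto
    qed
    then have "(\<Sum>w\<in>t - {w0}. u w * w k0) = 0"
      by (intro sum.neutral) blast
    then have "(\<Sum>w\<in>t. u w * w k0) = u w0"
      using sum.remove[OF t(1) w0(1), of "\<lambda>w. u w * w k0"] k0 delta by simp
    moreover have "(\<Sum>w\<in>t. u w * w k0) = 0"
      using fun_cong[OF t(3), of k0] by (simp add: sum_apply cscale_def)
    ultimately show False using w0(2) by simp
  qed
  moreover have "inj_on e R"
    by (rule inj_onI) (metis delta zero_neq_one)
  ultimately show ?thesis
    using cvs.dim_eq_card[OF span] card_image by metis
qed

lemma VchiKn_zero: "f \<in> VchiKn v eps chi n \<Longrightarrow> \<not> inG eps g \<Longrightarrow> f g = 0"
  by (simp add: VchiKn_def Vchi_def)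

lemma VchiKn_mmul_B:
  "f \<in> VchiKn v eps chi n \<Longrightarrow> inB eps b \<Longrightarrow> inG eps g \<Longrightarrow> f (mmul eps b g) = chi (m11 b) * f g"
  by (simp add: VchiKn_def Vchi_def chiB_def)

lemma VchiKn_mmul_Kn: "f \<in> VchiKn v eps chi n \<Longrightarrow> inKn v eps n k \<Longrightarrow> f (mmul eps g k) = f g"
  unfolding VchiKn_def rtrans_def by (metis (mono_tags, lifting) mem_Collect_eq)

locale char_level = quadratic_extension eps v + finite_residue_field v
  for eps :: "'f::field" and v :: "'f \<Rightarrow> int" +
  fixes n :: nat and chi :: "'f qe \<Rightarrow> complex"
  assumes two_nonzero: "(2::'f) \<noteq> 0" and n_pos: "0 < n"
    and chi_mult: "\<And>a b. a \<noteq> ezero \<Longrightarrow> b \<noteq> ezero \<Longrightarrow> chi (a \<otimes> b) = chi a * chi b"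
    and chi_trivial: "\<And>a. inPE v n (a \<ominus> eone) \<Longrightarrow> chi a = 1"
begin

definition coset_reps :: "'f qe m2 set" where
  "coset_reps = lower_unip ` reps_mod n \<union> w_unip ` reps_p_mod n"

lemma coset_reps_inK: "k \<in> coset_reps \<Longrightarrow> inK v eps k"
  unfolding coset_reps_def
  using lower_unip_inK w_unip_inK reps_mod_integral reps_p_mod_in_p inP_mono[of 0 1] by auto

lemma finite_coset_reps: "finite coset_reps"
  by (simp add: coset_reps_def finite_reps_mod finite_reps_p_mod)

lemma card_coset_reps: "card coset_reps = resq v ^ (n - 1) * (resq v + 1)"
proof -
  have "inj_on lower_unip (reps_mod n)" "inj_on w_unip (reps_p_mod n)"
    by (auto intro!: inj_onI simp: lower_unip_def w_unip_def)
  moreover have "lower_unip ` reps_mod n \<inter> w_unip ` reps_p_mod n = {}"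
    by (auto simp: lower_unip_def w_unip_def)
  ultimately have "card coset_reps = resq v ^ n + resq v ^ (n - 1)"
    unfolding coset_reps_def
    by (simp add: card_Un_disjoint finite_reps_mod finite_reps_p_mod card_image
        card_reps_mod card_reps_p_mod)
  also have "\<dots> = resq v ^ (n - 1) * (resq v + 1)"
    using n_pos by (cases n) simp_all
  finally show ?thesis .
qed

lemma double_coset_cover:
  assumes g: "inG eps g"
  shows "\<exists>b k0 k1. inB eps b \<and> k0 \<in> coset_reps \<and> inKn v eps n k1 \<and> g = mmul eps (mmul eps b k0) k1"
proof -
  obtain a b c d where gg: "g = M2 a b c d" by (cases g)
  have iso: "c \<otimes> econj d \<oplus> d \<otimes> econj c = ezero"
    using mmul_minv[OF g] by (simp add: gg minv_def mmul_def mid_def)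
  have nz: "c \<noteq> ezero \<or> d \<noteq> ezero"
    using inG_mdet[OF g] by (auto simp: gg mdet_def)
  have factor: "inB eps (mmul eps g (minv k)) \<and> g = mmul eps (mmul eps g (minv k)) k"
    if "inK v eps k" "m21 (mmul eps g (minv k)) = ezero" for k
    using that g by (simp add: inB_def inG_mmul inG_minv inK_inG mmul_assoc minv_mmul)
  from isotropic_cases[OF two_nonzero iso nz] show ?thesis
  proof
    assume "\<exists>y. inP v 0 y \<and> c = (0, y) \<otimes> d"
    then obtain y where y: "inP v 0 y" "c = (0, y) \<otimes> d" by blast
    obtain y0 where y0: "y0 \<in> reps_mod n" "inP v (int n) (y - y0)"
      using reps_mod_complete[OF y(1)] by blast
    let ?h = "mmul eps g (minv (lower_unip y))"
    have "m21 ?h = ezero"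
      using y(2) by (simp add: gg minv_def lower_unip_def mmul_def E_defs)
    then have "inB eps ?h" "g = mmul eps (mmul eps ?h (lower_unip y0)) (lower_unip (y - y0))"
      using factor[OF lower_unip_inK[OF y(1)]] by (simp_all add: mmul_assoc flip: lower_unip_diff)
    then show ?thesis
      using y0 lower_unip_inKn unfolding coset_reps_def by blast
  next
    assume "\<exists>x. inP v 1 x \<and> d = (0, x) \<otimes> c"
    then obtain x where x: "inP v 1 x" "d = (0, x) \<otimes> c" by blast
    obtain x0 where x0: "x0 \<in> reps_p_mod n" "inP v (int n) (x - x0)"
      using reps_p_mod_complete[OF n_pos x(1)] by blast
    let ?h = "mmul eps g (minv (w_unip x))"
    have "m21 ?h = ezero"
      using x(2) by (simp add: gg minv_def w_unip_def mmul_def E_defs)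
    then have "inB eps ?h" "g = mmul eps (mmul eps ?h (w_unip x0)) (upper_unip (x - x0))"
      using factor[OF w_unip_inK] x(1) inP_mono[of 0 1 x]
      by (simp_all add: mmul_assoc flip: w_unip_diff)
    then show ?thesis
      using x0 upper_unip_inKn unfolding coset_reps_def by blast
  qed
qed

lemma coset_reps_separate:
  assumes X: "inB eps X" and m: "inKn v eps n m" and k0: "k0 \<in> coset_reps" and k0': "k0' \<in> coset_reps"
    and eq: "mmul eps X k0 = mmul eps k0' m"
  shows "k0 = k0' \<and> inPE v n (m11 X \<ominus> eone)"
proof -
  have m1: "inKn v eps 1 m" using inKn_mono[OF _ m] n_pos by simp
  have int: "inP v 0 y" if "y \<in> reps_mod n" for y
    using that reps_mod_integral by blast
  have p: "inP v 1 x" "inP v 0 x" if "x \<in> reps_p_mod n" for x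
    using that reps_p_mod_in_p inP_mono[of 0 1] by auto
  show ?thesis
    using k0 k0' unfolding coset_reps_def
  proof (elim UnE imageE)
    fix y y' assume A: "k0 = lower_unip y" "y \<in> reps_mod n" "k0' = lower_unip y'" "y' \<in> reps_mod n"
    then have "inP v (int n) (y - y') \<and> inPE v n (m11 X \<ominus> eone)"
      using lower_unip_double_coset_eq[OF X m int[OF A(2)] int[OF A(4)]] eq by simp
    then show ?thesis using reps_mod_eq[OF A(2,4)] A by simp
  next
    fix y x' assume "k0 = lower_unip y" "y \<in> reps_mod n" "k0' = w_unip x'" "x' \<in> reps_p_mod n"
    then show ?thesis
      using lower_w_unip_double_coset_neq[OF X m1 int p(1)] eq by simp
  next
    fix x y' assume "k0 = w_unip x" "x \<in> reps_p_mod n" "k0' = lower_unip y'" "y' \<in> reps_mod n"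
    then show ?thesis
      using w_lower_unip_double_coset_neq[OF X m1 p(1) int] eq by simp
  next
    fix x x' assume A: "k0 = w_unip x" "x \<in> reps_p_mod n" "k0' = w_unip x'" "x' \<in> reps_p_mod n"
    then have "inP v (int n) (x - x') \<and> inPE v n (m11 X \<ominus> eone)"
      using w_unip_double_coset_eq[OF X m p(2)[OF A(2)] p(2)[OF A(4)]] eq by simp
    then show ?thesis using reps_p_mod_eq[OF n_pos A(2,4)] A by simp
  qed
qed

lemma double_coset_separate:
  assumes b: "inB eps b" "inB eps b'" and k0: "k0 \<in> coset_reps" "k0' \<in> coset_reps"
    and k1: "inKn v eps n k1" "inKn v eps n k1'"
    and eq: "mmul eps (mmul eps b k0) k1 = mmul eps (mmul eps b' k0') k1'"
  shows "k0 = k0' \<and> chi (m11 b) = chi (m11 b')"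
proof -
  let ?X = "mmul eps (minv b') b"
  have X: "inB eps ?X" using b inB_mmul inB_minv by blast
  have "mmul eps ?X k0 = mmul eps (minv b') (mmul eps (mmul eps (mmul eps b k0) k1) (minv k1))"
    using k1(1) by (simp add: mmul_assoc mmul_minv inKn_inK inK_inG)
  also have "\<dots> = mmul eps (minv b') (mmul eps (mmul eps (mmul eps b' k0') k1') (minv k1))"
    by (simp only: eq)
  also have "\<dots> = mmul eps k0' (mmul eps k1' (minv k1))"
    using b(2) by (simp add: mmul_assoc minv_mmul_cancel inB_def)
  finally have sep: "k0 = k0' \<and> inPE v n (m11 ?X \<ominus> eone)"
    using coset_reps_separate[OF X _ k0] k1 inKn_mmul inKn_minv by blast
  have "b = mmul eps b' ?X"
    using b(2) by (simp add: inB_def mmul_minv_cancel)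
  then have "m11 b = m11 b' \<otimes> m11 ?X"
    using m11_mmul_upper X by (metis inB_def)
  then have "chi (m11 b) = chi (m11 b')"
    using chi_mult inB_m11_nonzero b(2) X chi_trivial sep by simp
  with sep show ?thesis by simp
qed

definition coset_factor :: "'f qe m2 \<Rightarrow> 'f qe m2 \<Rightarrow> 'f qe m2 \<Rightarrow> bool" where
  "coset_factor k0 g b \<longleftrightarrow> inB eps b \<and> (\<exists>k1. inKn v eps n k1 \<and> g = mmul eps (mmul eps b k0) k1)"

definition coset_fun :: "'f qe m2 \<Rightarrow> 'f qe m2 \<Rightarrow> complex" where
  "coset_fun k0 g = (if \<exists>b. coset_factor k0 g b then chi (m11 (SOME b. coset_factor k0 g b)) else 0)"

lemma coset_factor_separate:
  assumes "k0 \<in> coset_reps" "k \<in> coset_reps" "coset_factor k0 g b" "coset_factor k g b'"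
  shows "k0 = k \<and> chi (m11 b) = chi (m11 b')"
proof -
  obtain k1 k1' where b: "inB eps b" "inB eps b'" and k1: "inKn v eps n k1" "inKn v eps n k1'"
    and g: "g = mmul eps (mmul eps b k0) k1" "g = mmul eps (mmul eps b' k) k1'"
    using assms(3,4) unfolding coset_factor_def by blast
  show ?thesis
    using double_coset_separate[OF b assms(1,2) k1] g by simp
qed

lemma coset_fun_eq:
  assumes k0: "k0 \<in> coset_reps" and b: "coset_factor k0 g b"
  shows "coset_fun k0 g = chi (m11 b)"
proof -
  have "coset_factor k0 g (SOME b. coset_factor k0 g b)"
    using b by (rule someI)
  then have "chi (m11 (SOME b. coset_factor k0 g b)) = chi (m11 b)"
    using coset_factor_separate[OF k0 k0 _ b] by blast
  moreover have "\<exists>b. coset_factor k0 g b" using b by blast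
  ultimately show ?thesis
    unfolding coset_fun_def by (simp only: if_True)
qed

lemma coset_fun_eq_0: "\<nexists>b. coset_factor k0 g b \<Longrightarrow> coset_fun k0 g = 0"
  unfolding coset_fun_def by (rule if_not_P)

lemma coset_factor_inG:
  assumes "k0 \<in> coset_reps" "coset_factor k0 g b"
  shows "inG eps g"
proof -
  obtain k1 where "inB eps b" "inKn v eps n k1" "g = mmul eps (mmul eps b k0) k1"
    using assms(2) unfolding coset_factor_def by blast
  then show ?thesis
    using assms(1) by (simp add: inG_mmul inB_def coset_reps_inK inKn_inK inK_inG)
qed

lemma coset_factor_mmul_Kn:
  assumes "inKn v eps n k" "coset_factor k0 g b"
  shows "coset_factor k0 (mmul eps g k) b"
proof -
  obtain k1 where b: "inB eps b" and k1: "inKn v eps n k1" and g: "g = mmul eps (mmul eps b k0) k1"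
    using assms(2) unfolding coset_factor_def by blast
  have "mmul eps g k = mmul eps (mmul eps b k0) (mmul eps k1 k)"
    using g by (simp add: mmul_assoc)
  then show ?thesis
    using b inKn_mmul[OF k1 assms(1)] unfolding coset_factor_def by blast
qed

lemma coset_factor_mmul_B:
  assumes "inB eps b" "coset_factor k0 g b1"
  shows "coset_factor k0 (mmul eps b g) (mmul eps b b1)"
proof -
  obtain k1 where b1: "inB eps b1" and k1: "inKn v eps n k1" and g: "g = mmul eps (mmul eps b1 k0) k1"
    using assms(2) unfolding coset_factor_def by blast
  have "mmul eps b g = mmul eps (mmul eps (mmul eps b b1) k0) k1"
    using g by (simp add: mmul_assoc)
  then show ?thesis
    using inB_mmul[OF assms(1) b1] k1 unfolding coset_factor_def by blast
qed

lemma chi_eone: "chi eone = 1"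
  by (simp add: chi_trivial)

lemma coset_fun_at_coset_reps:
  assumes k0: "k0 \<in> coset_reps" and k: "k \<in> coset_reps"
  shows "coset_fun k0 k = (if k = k0 then 1 else 0)"
proof -
  have self: "coset_factor k k mid"
    unfolding coset_factor_def using inB_mid inKn_mid[of n] mmul_mid by metis
  show ?thesis
  proof (cases "k = k0")
    case True
    have "coset_fun k k = chi (m11 mid)" by (rule coset_fun_eq[OF k self])
    then show ?thesis using True chi_eone by (simp add: mid_def)
  next
    case False
    have "\<nexists>b. coset_factor k0 k b"
      using coset_factor_separate[OF k0 k _ self] False by blast
    then show ?thesis using False coset_fun_eq_0 by simp
  qed
qed

lemma coset_fun_mmul_Kn:
  assumes k: "inKn v eps n k"
  shows "coset_fun k0 (mmul eps g k) = coset_fun k0 g"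
proof -
  have g: "g = mmul eps (mmul eps g k) (minv k)"
    using k by (simp add: mmul_assoc mmul_minv inKn_inK inK_inG)
  have "coset_factor k0 (mmul eps g k) b \<longleftrightarrow> coset_factor k0 g b" for b
  proof
    assume "coset_factor k0 (mmul eps g k) b"
    then show "coset_factor k0 g b"
      using coset_factor_mmul_Kn[OF inKn_minv[OF k]] g by metis
  qed (rule coset_factor_mmul_Kn[OF k])
  then have "coset_factor k0 (mmul eps g k) = coset_factor k0 g" by blast
  then show ?thesis by (simp add: coset_fun_def)
qed

lemma coset_fun_mmul_B:
  assumes k0: "k0 \<in> coset_reps" and b: "inB eps b"
  shows "coset_fun k0 (mmul eps b g) = chi (m11 b) * coset_fun k0 g"
proof (cases "\<exists>b1. coset_factor k0 g b1")
  case True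
  then obtain b1 where b1: "coset_factor k0 g b1" by blast
  then have "inB eps b1" by (simp add: coset_factor_def)
  then have "chi (m11 (mmul eps b b1)) = chi (m11 b) * chi (m11 b1)"
    using b by (simp add: m11_mmul_upper inB_def chi_mult inB_m11_nonzero)
  then show ?thesis
    using coset_fun_eq[OF k0] coset_factor_mmul_B[OF b b1] b1 by simp
next
  case False
  have g: "g = mmul eps (minv b) (mmul eps b g)"
    using b by (simp add: minv_mmul_cancel inB_def)
  have "\<nexists>b'. coset_factor k0 (mmul eps b g) b'"
  proof
    assume "\<exists>b'. coset_factor k0 (mmul eps b g) b'"
    then obtain b' where "coset_factor k0 (mmul eps b g) b'" by blast
    then have "coset_factor k0 g (mmul eps (minv b) b')"
      using coset_factor_mmul_B[OF inB_minv[OF b]] g by metis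
    then show False using False by blast
  qed
  then show ?thesis using False coset_fun_eq_0 by simp
qed

lemma coset_fun_in_VchiKn:
  assumes k0: "k0 \<in> coset_reps"
  shows "coset_fun k0 \<in> VchiKn v eps chi n"
proof -
  have "\<forall>g. \<not> inG eps g \<longrightarrow> coset_fun k0 g = 0"
    using coset_factor_inG[OF k0] coset_fun_eq_0 by blast
  moreover have "\<forall>b g. inB eps b \<longrightarrow> inG eps g \<longrightarrow>
      coset_fun k0 (mmul eps b g) = chiB chi b * coset_fun k0 g"
    using coset_fun_mmul_B[OF k0] by (simp add: chiB_def)
  moreover have "\<forall>k. inKn v eps n k \<longrightarrow> rtrans eps k (coset_fun k0) = coset_fun k0"
    using coset_fun_mmul_Kn by (simp add: rtrans_def)
  moreover have "\<forall>g. \<exists>m. \<forall>k. inKn v eps m k \<longrightarrow> coset_fun k0 (mmul eps g k) = coset_fun k0 g"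
    using coset_fun_mmul_Kn by blast
  ultimately show ?thesis
    unfolding VchiKn_def Vchi_def by blast
qed

lemma VchiKn_expansion:
  assumes f: "f \<in> VchiKn v eps chi n"
  shows "f = (\<Sum>k\<in>coset_reps. cscale (f k) (coset_fun k))"
proof
  fix g
  have "(\<Sum>k\<in>coset_reps. cscale (f k) (coset_fun k)) g = (\<Sum>k\<in>coset_reps. f k * coset_fun k g)"
    by (simp add: sum_apply cscale_def)
  also have "\<dots> = f g"
  proof (cases "inG eps g")
    case False
    then have "coset_fun k g = 0" if "k \<in> coset_reps" for k
      using that coset_factor_inG coset_fun_eq_0 by blast
    then show ?thesis
      using VchiKn_zero[OF f False] by simp
  next
    case True
    then obtain b k0 k1 where b: "inB eps b" and k0: "k0 \<in> coset_reps" and k1: "inKn v eps n k1"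
      and g: "g = mmul eps (mmul eps b k0) k1"
      using double_coset_cover by blast
    have factor: "coset_factor k0 g b" using b k1 g by (auto simp: coset_factor_def)
    have "coset_fun k g = 0" if "k \<in> coset_reps - {k0}" for k
      using that coset_factor_separate[OF k0 _ factor] coset_fun_eq_0 by blast
    then have "(\<Sum>k\<in>coset_reps - {k0}. f k * coset_fun k g) = 0"
      by (intro sum.neutral) simp
    then have "(\<Sum>k\<in>coset_reps. f k * coset_fun k g) = f k0 * coset_fun k0 g"
      using sum.remove[OF finite_coset_reps k0, of "\<lambda>k. f k * coset_fun k g"] by simp
    also have "\<dots> = chi (m11 b) * f (mmul eps k0 k1)"
      using coset_fun_eq[OF k0 factor] VchiKn_mmul_Kn[OF f k1] by simp
    also have "\<dots> = f g"
      using VchiKn_mmul_B[OF f b] inG_mmul[OF inK_inG[OF coset_reps_inK[OF k0]] inK_inG[OF inKn_inK[OF k1]]]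
      by (simp add: g mmul_assoc)
    finally show ?thesis .
  qed
  finally show "f g = (\<Sum>k\<in>coset_reps. cscale (f k) (coset_fun k)) g" ..
qed

lemma dim_VchiKn: "cvs.dim (VchiKn v eps chi n) = resq v ^ (n - 1) * (resq v + 1)"
proof -
  have "coset_fun ` coset_reps \<subseteq> VchiKn v eps chi n"
    using coset_fun_in_VchiKn by blast
  then have "cvs.dim (VchiKn v eps chi n) = card coset_reps"
    by (rule dim_eq_card_if_delta_basis[OF finite_coset_reps _ coset_fun_at_coset_reps VchiKn_expansion])
  then show ?thesis by (simp add: card_coset_reps)
qed

end

lemma (in discrete_valued_field) unitOE_if_congruent_one:
  assumes "0 < n" "inPE v n (a \<ominus> eone)"
  shows "unitOE v a"
proof -
  have a1: "inPE v 1 (a \<ominus> eone)" using assms inPE_mono[of 1 n] by simp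
  have "a = (a \<ominus> eone) \<oplus> eone" by (simp add: E_defs)
  then have "inOE v a"
    using inPE_eadd[OF inPE_mono[OF _ a1, of 0] inPE_eone_iff[THEN iffD2]] by (simp add: inOE_def)
  moreover have "\<not> inPE v 1 a"
  proof
    assume "inPE v 1 a"
    then have "inPE v 1 (a \<ominus> (a \<ominus> eone))" using a1 by (rule inPE_esub)
    moreover have "a \<ominus> (a \<ominus> eone) = eone" by (simp add: E_defs)
    ultimately show False by (simp add: inPE_eone_iff)
  qed
  ultimately show ?thesis by (simp add: unitOE_def)
qed

lemma (in discrete_valued_field) char_trivial_on_level:
  assumes depth: "char_depth v chi r" and "r < n" and a: "inPE v n (a \<ominus> eone)"
  shows "chi a = 1"
proof (cases "char_trivial_on v chi (r + 1)")
  case True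
  have "inTn v (r + 1) a"
    using a inPE_mono[of "r + 1" n] \<open>r < n\<close> by (simp add: inTn_def)
  with True show ?thesis
    unfolding char_trivial_on_def by blast
next
  case False
  then have "char_trivial_on v chi 0" using depth by (auto simp: char_depth_def)
  moreover have "inTn v 0 a"
    using unitOE_if_congruent_one[OF _ a] \<open>r < n\<close> by (simp add: inTn_def)
  ultimately show ?thesis
    unfolding char_trivial_on_def by blast
qed

lemma rep_depth_less_if_subset_VchiKn:
  assumes "W \<subseteq> VchiKn v eps chi n" "0 < n"
  shows "rep_depth v eps W < n"
proof -
  have "\<forall>k f. inKn v eps (n - 1 + 1) k \<longrightarrow> f \<in> W \<longrightarrow> rtrans eps k f = f"
    using assms by (auto simp: VchiKn_def)
  then have "rep_depth v eps W \<le> n - 1"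
    unfolding rep_depth_def by (rule Least_le)
  then show ?thesis using assms(2) by simp
qed

theorem lemma4p3:
  fixes v :: "'f::field \<Rightarrow> int" and eps :: 'f and chi :: "'f qe \<Rightarrow> complex"
    and r n :: nat
  assumes F: "nonarch_local_field v"
    and odd_res: "odd (resq v)"
    and eps_unit: "eps \<noteq> 0" "v eps = 0"
    and eps_nonsq: "\<not> (\<exists>y. y * y = eps)"
    and chi: "is_char_T eps chi"
    and depth: "char_depth v chi r"
    and n: "n \<ge> r + 1"
  shows "(\<forall>W. irreducible_K_subrep v eps (VchiKn v eps chi n) W \<longrightarrow> rep_depth v eps W < n) \<and>
         vector_space.dim cscale (VchiKn v eps chi n) = resq v ^ (n - 1) * (resq v + 1)"
proof
  interpret finite_residue_field v
    using F by unfold_locales (simp_all add: nonarch_local_field_def)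
  interpret char_level eps v n chi
  proof
    show "\<nexists>y. y * y = eps" by (fact eps_nonsq)
    show "v eps = 0" by (fact eps_unit(2))
    show "(2::'f) \<noteq> 0" by (rule two_nonzero_if_odd_resq[OF odd_res])
    show "0 < n" using n by simp
    show "chi (emul eps a b) = chi a * chi b" if "a \<noteq> ezero" "b \<noteq> ezero" for a b
      using chi that unfolding is_char_T_def by blast
    show "chi a = 1" if "inPE v n (a \<ominus> eone)" for a
      using char_trivial_on_level[OF depth _ that] n by simp
  qed
  show "\<forall>W. irreducible_K_subrep v eps (VchiKn v eps chi n) W \<longrightarrow> rep_depth v eps W < n"
  proof (intro allI impI)
    fix W assume "irreducible_K_subrep v eps (VchiKn v eps chi n) W"
    then have "W \<subseteq> VchiKn v eps chi n"
      by (simp add: irreducible_K_subrep_def K_subrep_def)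
    then show "rep_depth v eps W < n"
      using n_pos by (rule rep_depth_less_if_subset_VchiKn)
  qed
  show "vector_space.dim cscale (VchiKn v eps chi n) = resq v ^ (n - 1) * (resq v + 1)"
    by (rule dim_VchiKn)
qed

end
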